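(* Let $\mathcal C\subseteq 2^{[n]}$ be an inductively pierced code, and suppose $G(\mathcal C)$ contains a clique of size $k+1$. Then $\mathcal C$ does not have a well-formed realization by open balls in $\mathbb R^{k-1}$.
   Context: A code is a set $\mathcal C\subseteq 2^{[n]}$, $[n]=\{1,\dots,n\}$. Standing conventions: $\emptyset\in\mathcal C$; every neuron lies in some codeword; no two distinct neurons lie in exactly the same codewords. $\mathcal C\setminus i$ is obtained by removing $i$ from every codeword. For $\alpha\subseteq\beta$, $[\alpha,\beta]=\{\gamma:\alpha\subseteq\gamma\subseteq\beta\}$, of rank $|\beta\setminus\alpha|$. A neuron $i$ is a $k$-piercing of $\mathcal C$ if there are $\sigma\subseteq\tau\subseteq[n]\setminus\{i\}$ with $[\sigma,\tau]$ of rank $k$, $[\sigma,\tau]\subseteq\mathcal C\setminus i$, and $\mathcal C=(\mathcal C\setminus i)\cup[\sigma\cup\{i\},\tau\cup\{i\}]$. A code is $k$-inductively pierced if $\mathcal C=\{\emptyset\}$, or some neuron $i$ is a $k'$-piercing for some $k'\le k$ and $\mathcal C\setminus i$ is $k$-inductively pierced; inductively pierced means $k$-inductively pierced for some $k$. A pseudo-monomial is $\prod_{a\in\alpha}x_a\prod_{b\in\beta}(1-x_b)\in\mathbb F_2[x_1,\dots,x_n]$ with $\alpha\cap\beta=\emptyset$, ordered by divisibility; $J_\mathcal C=\langle\rho_\gamma:\gamma\notin\mathcal C\rangle$ with $\rho_\gamma=\prod_{a\in\gamma}x_a\prod_{b\notin\gamma}(1-x_b)$, and $\mathrm{CF}(J_\mathcal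 C)$ is its set of minimal pseudo-monomials (for inductively pierced codes all have degree two). $G(\mathcal C)$ is the graph on $[n]$ with edge $ab$ whenever $\mathrm{CF}(J_\mathcal C)$ contains no pseudo-monomial in the variables $x_a,x_b$. Sets $U_1,\dots,U_n\subseteq\mathbb R^d$ realize $\mathcal C$ if $\mathcal C=\{\gamma:\bigcap_{i\in\gamma}U_i\setminus\bigcup_{j\notin\gamma}U_j\ne\emptyset\}$. A collection of $(d-1)$-spheres in $\mathbb R^d$ is well-formed if for every $m\le d$ the intersection of any $m$ of them is empty or a $(d-m)$-dimensional sphere, and the intersection of any $d+1$ of them is empty; open balls are well-formed if their boundary spheres are. *)

theory Defs
  imports "HOL-Analysis.Analysis" "HOL-Library.Poly_Mapping" "HOL-Library.Z2"
begin

definition is_code :: "nat \<Rightarrow> nat set set \<Rightarrow> bool" where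
  "is_code n C \<longleftrightarrow> C \<subseteq> Pow {1..n} \<and> {} \<in> C
     \<and> (\<forall>i\<in>{1..n}. \<exists>c\<in>C. i \<in> c)
     \<and> (\<forall>i\<in>{1..n}. \<forall>j\<in>{1..n}. i \<noteq> j \<longrightarrow> (\<exists>c\<in>C. (i \<in> c) \<noteq> (j \<in> c)))"

definition code_del :: "nat set set \<Rightarrow> nat \<Rightarrow> nat set set" where
  "code_del C i = (\<lambda>c. c - {i}) ` C"

definition bool_interval :: "nat set \<Rightarrow> nat set \<Rightarrow> nat set set" where
  "bool_interval s t = {g. s \<subseteq> g \<and> g \<subseteq> t}"

definition is_piercing :: "nat set set \<Rightarrow> nat \<Rightarrow> nat \<Rightarrow> bool" where
  "is_piercing C i k \<longleftrightarrow> (\<exists>s t. s \<subseteq> t \<and> finite t \<and> i \<notin> t \<and> card (t - s) = k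
     \<and> bool_interval s t \<subseteq> code_del C i
     \<and> C = code_del C i \<union> bool_interval (insert i s) (insert i t))"

inductive k_ind_pierced :: "nat \<Rightarrow> nat set set \<Rightarrow> bool" for k where
  base: "k_ind_pierced k {{}}"
| step: "is_piercing C i k' \<Longrightarrow> k' \<le> k \<Longrightarrow> k_ind_pierced k (code_del C i)
          \<Longrightarrow> k_ind_pierced k C"

definition ind_pierced :: "nat set set \<Rightarrow> bool" where
  "ind_pierced C \<longleftrightarrow> (\<exists>k. k_ind_pierced k C)"

type_synonym f2poly = "(nat \<Rightarrow>\<^sub>0 nat) \<Rightarrow>\<^sub>0 bit"

definition Xv :: "nat \<Rightarrow> f2poly" where
  "Xv a = Poly_Mapping.single (Poly_Mapping.single a 1) 1"

definition pmono :: "nat set \<Rightarrow> nat set \<Rightarrow> f2poly" where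
  "pmono A B = (\<Prod>a\<in>A. Xv a) * (\<Prod>b\<in>B. 1 - Xv b)"

definition is_pseudo_monomial :: "nat \<Rightarrow> f2poly \<Rightarrow> bool" where
  "is_pseudo_monomial n f \<longleftrightarrow> (\<exists>A B. A \<subseteq> {1..n} \<and> B \<subseteq> {1..n} \<and> A \<inter> B = {} \<and> f = pmono A B)"

definition rho :: "nat \<Rightarrow> nat set \<Rightarrow> f2poly" where
  "rho n g = pmono g ({1..n} - g)"

definition neural_ideal :: "nat \<Rightarrow> nat set set \<Rightarrow> f2poly set" where
  "neural_ideal n C = {f. \<exists>h. f = (\<Sum>g\<in>{g. g \<subseteq> {1..n} \<and> g \<notin> C}. h g * rho n g)}"

definition canonical_form :: "nat \<Rightarrow> nat set set \<Rightarrow> f2poly set" where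
  "canonical_form n C = {f. is_pseudo_monomial n f \<and> f \<in> neural_ideal n C \<and>
      \<not> (\<exists>g. is_pseudo_monomial n g \<and> g \<in> neural_ideal n C \<and> g dvd f \<and> \<not> f dvd g)}"

definition code_graph_edge :: "nat \<Rightarrow> nat set set \<Rightarrow> nat \<Rightarrow> nat \<Rightarrow> bool" where
  "code_graph_edge n C a b \<longleftrightarrow> a \<in> {1..n} \<and> b \<in> {1..n} \<and> a \<noteq> b \<and>
     \<not> (\<exists>A B. A \<inter> B = {} \<and> A \<union> B = {a, b} \<and> pmono A B \<in> canonical_form n C)"

definition realizes :: "nat \<Rightarrow> nat set set \<Rightarrow> (nat \<Rightarrow> 'a set) \<Rightarrow> bool" where
  "realizes n C U \<longleftrightarrow>
     C = {g. g \<subseteq> {1..n} \<and> (\<Inter>i\<in>g. U i) - (\<Union>j\<in>{1..n} - g. U j) \<noteq> {}}"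

definition is_sphere_of_dim :: "nat \<Rightarrow> 'a::euclidean_space set \<Rightarrow> bool" where
  "is_sphere_of_dim j X \<longleftrightarrow> (\<exists>A c r. affine A \<and> aff_dim A = int j + 1 \<and> c \<in> A \<and> r > 0
      \<and> X = A \<inter> sphere c r)"

definition well_formed_balls :: "nat set \<Rightarrow> (nat \<Rightarrow> 'a::euclidean_space) \<Rightarrow> (nat \<Rightarrow> real) \<Rightarrow> bool" where
  "well_formed_balls I c r \<longleftrightarrow>
     (\<forall>S. S \<subseteq> I \<and> S \<noteq> {} \<and> card S \<le> DIM('a) \<longrightarrow>
        (\<Inter>i\<in>S. sphere (c i) (r i)) = {} \<or>
        is_sphere_of_dim (DIM('a) - card S) (\<Inter>i\<in>S. sphere (c i) (r i)))
   \<and> (\<forall>S. S \<subseteq> I \<and> card S = DIM('a) + 1 \<longrightarrow> (\<Inter>i\<in>S. sphere (c i) (r i)) = {})"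

end

theory Submission
  imports Defs
begin

text \<open>Two neurons a, b joined by an edge of G(C) have receptive fields that meet and of
  which neither contains the other: otherwise x_a x_b or x_a (1 - x_b) would be a minimal
  pseudo-monomial of the neural ideal. In an inductively pierced code every such clique K is
  shattered, i.e. every subset of K is the trace on K of a codeword, since a neuron i of K is
  pierced along an interval whose free part contains all of K - {i}. A realization by balls in
  R^d would thus give |K| = d + 2 balls forming a Venn diagram. This is impossible: for an
  affine relation l of their centres, the combination of powers
  sum_i l_i (|x - c_i|^2 - r_i^2) does not depend on x, yet it is negative at a point lying
  exactly in the balls with l_i > 0 and positive at a point lying exactly in the balls with
  l_i < 0.\<close>

section \<open>Evaluating polynomials at 0/1 points\<close>

text \<open>The value of f at the point with x_a = 1 for a in P and x_a = 0 otherwise.\<close>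

definition eval_at :: "'v set \<Rightarrow> (('v \<Rightarrow>\<^sub>0 nat) \<Rightarrow>\<^sub>0 'a::comm_semiring_1) \<Rightarrow> 'a" where
  "eval_at P f = (\<Sum>m\<in>Poly_Mapping.keys f.
     if Poly_Mapping.keys m \<subseteq> P then Poly_Mapping.lookup f m else 0)"

lemma eval_at_add: "eval_at P (f + g) = eval_at P f + eval_at P g"
  unfolding eval_at_def
  by (rule setsum_keys_plus_distrib[where f = "\<lambda>m v. if Poly_Mapping.keys m \<subseteq> P then v else 0"])
    auto

lemma eval_at_zero [simp]: "eval_at P 0 = 0"
  by (simp add: eval_at_def)

lemma eval_at_diff:
  fixes f g :: "('v \<Rightarrow>\<^sub>0 nat) \<Rightarrow>\<^sub>0 'a::comm_ring_1"
  shows "eval_at P (f - g) = eval_at P f - eval_at P g"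
  using eval_at_add[of P "f - g" g] by (simp add: algebra_simps)

lemma eval_at_single:
  "eval_at P (Poly_Mapping.single m a) = (if Poly_Mapping.keys m \<subseteq> P then a else 0)"
  by (cases "a = 0") (auto simp: eval_at_def)

lemma eval_at_one [simp]: "eval_at P 1 = 1"
  using eval_at_single[of P 0 1] by simp

lemma eval_at_sum: "eval_at P (sum h A) = (\<Sum>x\<in>A. eval_at P (h x))"
  by (induction A rule: infinite_finite_induct) (auto simp: eval_at_add)

lemma sum_single_lookup:
  "(\<Sum>m\<in>Poly_Mapping.keys f. Poly_Mapping.single m (Poly_Mapping.lookup f m)) = f"
  by (rule poly_mapping_eqI) (simp add: lookup_sum lookup_single when_def in_keys_iff)

lemma keys_add_nat:
  "Poly_Mapping.keys ((m :: 'a \<Rightarrow>\<^sub>0 nat) + m') = Poly_Mapping.keys m \<union> Poly_Mapping.keys m'"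
  by (auto simp: in_keys_iff lookup_add)

lemma eval_at_mult: "eval_at P (f * g) = eval_at P f * eval_at P g"
proof -
  let ?F = "Poly_Mapping.keys f" and ?G = "Poly_Mapping.keys g"
  let ?f = "Poly_Mapping.lookup f" and ?g = "Poly_Mapping.lookup g"
  have "f * g = (\<Sum>m\<in>?F. \<Sum>m'\<in>?G. Poly_Mapping.single (m + m') (?f m * ?g m'))"
    by (subst (1 2) sum_single_lookup[symmetric]) (simp only: sum_product mult_single)
  then have "eval_at P (f * g)
      = (\<Sum>m\<in>?F. \<Sum>m'\<in>?G. eval_at P (Poly_Mapping.single (m + m') (?f m * ?g m')))"
    by (simp add: eval_at_sum)
  also have "\<dots> = (\<Sum>m\<in>?F. \<Sum>m'\<in>?G. (if Poly_Mapping.keys m \<subseteq> P then ?f m else 0)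
                                     * (if Poly_Mapping.keys m' \<subseteq> P then ?g m' else 0))"
    by (intro sum.cong refl)
      (simp only: eval_at_single keys_add_nat Un_subset_iff mult_zero_left mult_zero_right
        split: if_split, blast)
  also have "\<dots> = eval_at P f * eval_at P g"
    by (simp only: eval_at_def sum_product)
  finally show ?thesis .
qed

lemma eval_at_prod: "eval_at P (prod h A) = (\<Prod>x\<in>A. eval_at P (h x))"
  by (induction A rule: infinite_finite_induct) (auto simp: eval_at_mult)

lemma eval_at_Xv: "eval_at P (Xv a) = (if a \<in> P then 1 else 0)"
  by (simp add: Xv_def eval_at_single)

lemma prod_if_one_zero:
  "finite A \<Longrightarrow> (\<Prod>x\<in>A. if Q x then 1 else 0 :: 'a::comm_semiring_1) = (if \<forall>x\<in>A. Q x then 1 else 0)"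
  by (induction A rule: finite_induct) auto

lemma eval_at_pmono:
  assumes "finite A" "finite B"
  shows "eval_at P (pmono A B) = (if A \<subseteq> P \<and> B \<inter> P = {} then 1 else 0)"
proof -
  have "eval_at P (1 - Xv b) = (if b \<notin> P then 1 else 0)" for b
    by (simp add: eval_at_diff eval_at_Xv)
  then show ?thesis
    using assms by (simp add: pmono_def eval_at_mult eval_at_prod eval_at_Xv prod_if_one_zero
        subset_iff disjoint_iff)
qed

section \<open>Pseudo-monomials in the neural ideal and its canonical form\<close>

definition pmono_vanishes_on :: "nat set set \<Rightarrow> nat set \<Rightarrow> nat set \<Rightarrow> bool" where
  "pmono_vanishes_on C A B \<longleftrightarrow> (\<forall>c\<in>C. \<not> (A \<subseteq> c \<and> B \<inter> c = {}))"

lemma eval_at_neural_ideal: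
  assumes "f \<in> neural_ideal n C" "c \<in> C" "c \<subseteq> {1..n}"
  shows "eval_at c f = 0"
proof -
  obtain h where f: "f = (\<Sum>g\<in>{g. g \<subseteq> {1..n} \<and> g \<notin> C}. h g * rho n g)"
    using assms(1) by (auto simp: neural_ideal_def)
  have "eval_at c (rho n g) = 0" if "g \<subseteq> {1..n}" "g \<notin> C" for g
  proof -
    have "g \<noteq> c"
      using that assms(2) by auto
    then have "\<not> (g \<subseteq> c \<and> ({1..n} - g) \<inter> c = {})"
      using assms(3) by auto
    moreover have "finite g"
      using that finite_subset by blast
    ultimately show ?thesis
      by (simp add: rho_def eval_at_pmono)
  qed
  then show ?thesis
    by (simp add: f eval_at_sum eval_at_mult)
qed

lemma pmono_eq_sum_rho:
  assumes "A \<subseteq> {1..n}" "B \<subseteq> {1..n}" "A \<inter> B = {}"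
  shows "pmono A B = (\<Sum>g\<in>{g. g \<subseteq> {1..n} \<and> A \<subseteq> g \<and> g \<inter> B = {}}. rho n g)"
proof -
  define R where "R = {1..n} - A - B"
  have fin: "finite A" "finite B" "finite R"
    using assms(1,2) by (auto simp: R_def intro: finite_subset[OF _ finite_atLeastAtMost])
  have split_R: "(\<Sum>T\<in>Pow R. (\<Prod>j\<in>T. Xv j) * (\<Prod>j\<in>R - T. 1 - Xv j)) = (1 :: f2poly)"
    using prod_add[OF fin(3), of Xv "\<lambda>j. 1 - Xv j"] by simp
  have rho_A_T: "pmono A B * ((\<Prod>j\<in>T. Xv j) * (\<Prod>j\<in>R - T. 1 - Xv j)) = rho n (A \<union> T)"
    if "T \<subseteq> R" for T
  proof -
    have T: "finite T" "A \<inter> T = {}" "B \<inter> (R - T) = {}"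
      using that fin(3) by (auto simp: R_def intro: finite_subset)
    have "{1..n} - (A \<union> T) = B \<union> (R - T)"
      using that assms by (auto simp: R_def)
    then have "rho n (A \<union> T) = (\<Prod>j\<in>A \<union> T. Xv j) * (\<Prod>j\<in>B \<union> (R - T). 1 - Xv j)"
      by (simp only: rho_def pmono_def)
    also have "\<dots> = ((\<Prod>j\<in>A. Xv j) * (\<Prod>j\<in>T. Xv j))
                     * ((\<Prod>j\<in>B. 1 - Xv j) * (\<Prod>j\<in>R - T. 1 - Xv j))"
      using fin T by (simp add: prod.union_disjoint)
    finally show ?thesis
      by (simp add: pmono_def mult_ac)
  qed
  have image_Pow_R: "(\<union>) A ` Pow R = {g. g \<subseteq> {1..n} \<and> A \<subseteq> g \<and> g \<inter> B = {}}"
  proof (intro equalityI subsetI)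
    fix g assume "g \<in> {g. g \<subseteq> {1..n} \<and> A \<subseteq> g \<and> g \<inter> B = {}}"
    then have "g = A \<union> (g - A)" "g - A \<in> Pow R"
      by (auto simp: R_def)
    then show "g \<in> (\<union>) A ` Pow R"
      by blast
  qed (use assms in \<open>auto simp: R_def\<close>)
  have "pmono A B = pmono A B * (\<Sum>T\<in>Pow R. (\<Prod>j\<in>T. Xv j) * (\<Prod>j\<in>R - T. 1 - Xv j))"
    by (simp only: split_R mult_1_right)
  also have "\<dots> = (\<Sum>T\<in>Pow R. rho n (A \<union> T))"
    by (simp add: sum_distrib_left rho_A_T)
  also have "\<dots> = (\<Sum>g\<in>(\<union>) A ` Pow R. rho n g)"
    by (rule sum.reindex[symmetric, unfolded comp_def]) (auto simp: inj_on_def R_def)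
  finally show ?thesis
    by (simp only: image_Pow_R)
qed

lemma pmono_in_neural_ideal:
  assumes "A \<subseteq> {1..n}" "B \<subseteq> {1..n}" "A \<inter> B = {}" "pmono_vanishes_on C A B"
  shows "pmono A B \<in> neural_ideal n C"
proof -
  let ?N = "{g. g \<subseteq> {1..n} \<and> g \<notin> C}"
  let ?h = "\<lambda>g. if A \<subseteq> g \<and> g \<inter> B = {} then 1 else 0 :: f2poly"
  have "pmono A B = (\<Sum>g\<in>?N. ?h g * rho n g)"
    unfolding pmono_eq_sum_rho[OF assms(1-3)]
    by (rule sum.mono_neutral_cong_left)
      (use assms(4) in \<open>auto simp: pmono_vanishes_on_def Int_commute\<close>)
  then show ?thesis
    unfolding neural_ideal_def by (intro CollectI exI[of _ ?h])
qed

lemma pmono_dvd_pmono_imp_subset: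
  assumes "finite A" "finite B" "A \<inter> B = {}" "finite A'" "finite B'"
    and "pmono A' B' dvd pmono A B"
  shows "A' \<subseteq> A \<and> B' \<subseteq> B"
proof -
  obtain q where q: "pmono A B = pmono A' B' * q"
    using assms(6) by (elim dvdE)
  have nonzero: "eval_at P (pmono A' B') = 1" if "eval_at P (pmono A B) = 1" for P
    using that by (metis q eval_at_mult mult_zero_left bit_not_one_iff)
  have "A' \<subseteq> A"
    using nonzero[of A] assms by (auto simp: eval_at_pmono Int_commute split: if_splits)
  moreover have "B' \<subseteq> B"
  proof
    fix e assume e: "e \<in> B'"
    show "e \<in> B"
    proof (rule ccontr)
      assume "e \<notin> B"
      then have "eval_at (insert e A) (pmono A B) = 1"
        using assms(1-3) by (auto simp: eval_at_pmono)
      then show False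
        using nonzero e assms(4,5) by (fastforce simp: eval_at_pmono)
    qed
  qed
  ultimately show ?thesis ..
qed

lemma pmono_in_canonical_form:
  assumes "A \<subseteq> {1..n}" "B \<subseteq> {1..n}" "A \<inter> B = {}" "C \<subseteq> Pow {1..n}"
    and "pmono_vanishes_on C A B"
    and "\<And>A' B'. A' \<subseteq> A \<Longrightarrow> B' \<subseteq> B \<Longrightarrow> (A', B') \<noteq> (A, B) \<Longrightarrow> \<not> pmono_vanishes_on C A' B'"
  shows "pmono A B \<in> canonical_form n C"
proof -
  have no_smaller: False
    if g: "is_pseudo_monomial n g" "g \<in> neural_ideal n C" "g dvd pmono A B" "\<not> pmono A B dvd g"
    for g
  proof -
    obtain A' B' where A'B': "A' \<subseteq> {1..n}" "B' \<subseteq> {1..n}" "g = pmono A' B'"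
      using g(1) unfolding is_pseudo_monomial_def by blast
    have fin: "finite A" "finite B" "finite A'" "finite B'"
      using assms(1,2) A'B'(1,2) by (auto intro: finite_subset[OF _ finite_atLeastAtMost])
    have "A' \<subseteq> A" "B' \<subseteq> B"
      using pmono_dvd_pmono_imp_subset[OF fin(1,2) assms(3) fin(3,4)] g(3) A'B'(3) by auto
    moreover have "(A', B') \<noteq> (A, B)"
      using g(4) A'B'(3) by (metis dvd_refl prod.inject)
    ultimately have "\<not> pmono_vanishes_on C A' B'"
      by (rule assms(6))
    then obtain c where c: "c \<in> C" "A' \<subseteq> c" "B' \<inter> c = {}"
      unfolding pmono_vanishes_on_def by blast
    then have "eval_at c g = 1"
      using fin by (simp add: A'B'(3) eval_at_pmono)
    moreover have "eval_at c g = 0"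
      using eval_at_neural_ideal[OF g(2) c(1)] c(1) assms(4) by auto
    ultimately show False
      by simp
  qed
  moreover have "is_pseudo_monomial n (pmono A B)"
    unfolding is_pseudo_monomial_def using assms(1-3) by blast
  ultimately show ?thesis
    using pmono_in_neural_ideal[OF assms(1-3,5)] unfolding canonical_form_def by blast
qed

section \<open>Cliques of the code graph\<close>

definition pairwise_overlapping :: "'a set set \<Rightarrow> 'a set \<Rightarrow> bool" where
  "pairwise_overlapping C K \<longleftrightarrow> (\<forall>a\<in>K. \<exists>c\<in>C. a \<in> c)
     \<and> (\<forall>a\<in>K. \<forall>b\<in>K. a \<noteq> b \<longrightarrow> (\<exists>c\<in>C. a \<in> c \<and> b \<in> c) \<and> (\<exists>c\<in>C. a \<in> c \<and> b \<notin> c))"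

lemma pairwise_overlappingD:
  assumes "pairwise_overlapping C K" "a \<in> K" "b \<in> K" "a \<noteq> b"
  shows "\<exists>c\<in>C. a \<in> c \<and> b \<in> c" "\<exists>c\<in>C. a \<in> c \<and> b \<notin> c"
  using assms unfolding pairwise_overlapping_def by simp_all

lemma code_graph_edge_common_codeword:
  assumes "is_code n C" "code_graph_edge n C a b"
  shows "\<exists>c\<in>C. a \<in> c \<and> b \<in> c"
proof (rule ccontr)
  assume none: "\<not> (\<exists>c\<in>C. a \<in> c \<and> b \<in> c)"
  have ab: "a \<in> {1..n}" "b \<in> {1..n}"
    using assms(2) unfolding code_graph_edge_def by blast+
  have "pmono {a, b} {} \<in> canonical_form n C"
  proof (rule pmono_in_canonical_form)
    show "{a, b} \<subseteq> {1..n}" "{} \<subseteq> {1..n}" "{a, b} \<inter> {} = {}" "C \<subseteq> Pow {1..n}"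
      using ab assms(1) by (auto simp: is_code_def)
    show "pmono_vanishes_on C {a, b} {}"
      using none by (auto simp: pmono_vanishes_on_def)
    fix A' B' :: "nat set"
    assume A': "A' \<subseteq> {a, b}" and B': "B' \<subseteq> {}" and "(A', B') \<noteq> ({a, b}, {})"
    then have "a \<notin> A' \<or> b \<notin> A'"
      by auto
    then have "A' \<subseteq> {b} \<or> A' \<subseteq> {a}"
      using A' by blast
    moreover obtain ca cb where "ca \<in> C" "a \<in> ca" "cb \<in> C" "b \<in> cb"
      using ab assms(1) unfolding is_code_def by meson
    ultimately show "\<not> pmono_vanishes_on C A' B'"
      using B' unfolding pmono_vanishes_on_def by blast
  qed
  then have "\<exists>A B. A \<inter> B = {} \<and> A \<union> B = {a, b} \<and> pmono A B \<in> canonical_form n C"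
    by (intro exI[of _ "{a, b}"] exI[of _ "{}"]) simp
  then show False
    using assms(2) by (simp add: code_graph_edge_def)
qed

lemma code_graph_edge_separating_codeword:
  assumes "is_code n C" "code_graph_edge n C a b"
  shows "\<exists>c\<in>C. a \<in> c \<and> b \<notin> c"
proof (rule ccontr)
  assume none: "\<not> (\<exists>c\<in>C. a \<in> c \<and> b \<notin> c)"
  have ab: "a \<in> {1..n}" "b \<in> {1..n}" "a \<noteq> b"
    using assms(2) unfolding code_graph_edge_def by blast+
  have "pmono {a} {b} \<in> canonical_form n C"
  proof (rule pmono_in_canonical_form)
    show "{a} \<subseteq> {1..n}" "{b} \<subseteq> {1..n}" "{a} \<inter> {b} = {}" "C \<subseteq> Pow {1..n}"
      using ab assms(1) by (auto simp: is_code_def)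
    show "pmono_vanishes_on C {a} {b}"
      using none by (auto simp: pmono_vanishes_on_def)
    fix A' B' :: "nat set"
    assume A': "A' \<subseteq> {a}" and "B' \<subseteq> {b}" "(A', B') \<noteq> ({a}, {b})"
    then have "A' = {} \<or> B' = {}"
      by auto
    moreover obtain ca where "ca \<in> C" "a \<in> ca"
      using ab assms(1) unfolding is_code_def by meson
    moreover have "{} \<in> C"
      using assms(1) by (simp add: is_code_def)
    ultimately show "\<not> pmono_vanishes_on C A' B'"
      using A' unfolding pmono_vanishes_on_def by blast
  qed
  then have "\<exists>A B. A \<inter> B = {} \<and> A \<union> B = {a, b} \<and> pmono A B \<in> canonical_form n C"
    using ab(3) by (intro exI[of _ "{a}"] exI[of _ "{b}"]) auto
  then show False
    using assms(2) by (simp add: code_graph_edge_def)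
qed

lemma code_graph_clique_pairwise_overlapping:
  assumes "is_code n C" "K \<subseteq> {1..n}" "\<forall>a\<in>K. \<forall>b\<in>K. a \<noteq> b \<longrightarrow> code_graph_edge n C a b"
  shows "pairwise_overlapping C K"
  unfolding pairwise_overlapping_def
proof (intro conjI ballI impI)
  fix a assume "a \<in> K"
  then show "\<exists>c\<in>C. a \<in> c"
    using assms(1,2) unfolding is_code_def by blast
next
  fix a b assume "a \<in> K" "b \<in> K" "a \<noteq> b"
  then have "code_graph_edge n C a b"
    using assms(3) by simp
  then show "\<exists>c\<in>C. a \<in> c \<and> b \<in> c" "\<exists>c\<in>C. a \<in> c \<and> b \<notin> c"
    using code_graph_edge_common_codeword code_graph_edge_separating_codeword assms(1) by simp_all
qed

section \<open>Shattering by inductively pierced codes\<close>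

definition shatters :: "'a set set \<Rightarrow> 'a set \<Rightarrow> bool" where
  "shatters C K \<longleftrightarrow> (\<forall>S\<subseteq>K. \<exists>c\<in>C. c \<inter> K = S)"

lemma pairwise_overlapping_code_del:
  assumes "pairwise_overlapping C K"
  shows "pairwise_overlapping (code_del C i) (K - {i})"
proof -
  have del: "c - {i} \<in> code_del C i" if "c \<in> C" for c
    using that by (simp add: code_del_def)
  show ?thesis
    unfolding pairwise_overlapping_def
  proof (intro conjI ballI impI)
    fix a assume a: "a \<in> K - {i}"
    then obtain c where "c \<in> C" "a \<in> c"
      using assms unfolding pairwise_overlapping_def by blast
    then show "\<exists>c\<in>code_del C i. a \<in> c"
      using a by (intro bexI[of _ "c - {i}"] del) auto
  next
    fix a b assume ab: "a \<in> K - {i}" "b \<in> K - {i}" "a \<noteq> b"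
    obtain c where "c \<in> C" "a \<in> c" "b \<in> c"
      using pairwise_overlappingD(1)[OF assms, of a b] ab by blast
    then show "\<exists>c\<in>code_del C i. a \<in> c \<and> b \<in> c"
      using ab by (intro bexI[of _ "c - {i}"] del) auto
    obtain c' where "c' \<in> C" "a \<in> c'" "b \<notin> c'"
      using pairwise_overlappingD(2)[OF assms, of a b] ab by blast
    then show "\<exists>c\<in>code_del C i. a \<in> c \<and> b \<notin> c"
      using ab by (intro bexI[of _ "c' - {i}"] del) auto
  qed
qed

lemma piercing_codeword_bounds:
  assumes "C = code_del C i \<union> bool_interval (insert i s) (insert i t)" "c \<in> C" "i \<in> c"
  shows "insert i s \<subseteq> c" "c \<subseteq> insert i t"
proof -
  have "i \<notin> c'" if "c' \<in> code_del C i" for c'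
    using that by (auto simp: code_del_def)
  then have "c \<in> bool_interval (insert i s) (insert i t)"
    using assms by blast
  then show "insert i s \<subseteq> c" "c \<subseteq> insert i t"
    by (simp_all add: bool_interval_def)
qed

lemma pairwise_overlapping_piercing_free:
  assumes "C = code_del C i \<union> bool_interval (insert i s) (insert i t)"
    and "pairwise_overlapping C K" "i \<in> K"
  shows "K - {i} \<subseteq> t - s"
proof
  fix j assume j: "j \<in> K - {i}"
  obtain c where c: "c \<in> C" "i \<in> c" "j \<in> c"
    using pairwise_overlappingD(1)[OF assms(2,3), of j] j by blast
  obtain c' where c': "c' \<in> C" "i \<in> c'" "j \<notin> c'"
    using pairwise_overlappingD(2)[OF assms(2,3), of j] j by blast
  have "j \<in> t"
    using piercing_codeword_bounds(2)[OF assms(1) c(1,2)] c(3) j by blast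
  moreover have "j \<notin> s"
    using piercing_codeword_bounds(1)[OF assms(1) c'(1,2)] c'(3) by blast
  ultimately show "j \<in> t - s"
    by blast
qed

lemma shatters_mono: "shatters C K \<Longrightarrow> C \<subseteq> C' \<Longrightarrow> shatters C' K"
  unfolding shatters_def by blast

lemma shatters_interval_extension:
  assumes C: "C = code_del C i \<union> bool_interval (insert i s) (insert i t)"
    and "s \<subseteq> t" "i \<notin> t" "K - {i} \<subseteq> t - s" "shatters (code_del C i) (K - {i})"
  shows "shatters C K"
  unfolding shatters_def
proof (intro allI impI)
  fix S assume S: "S \<subseteq> K"
  show "\<exists>c\<in>C. c \<inter> K = S"
  proof (cases "i \<in> S")
    case False
    then obtain c where c: "c \<in> code_del C i" "c \<inter> (K - {i}) = S"
      using assms(5) S unfolding shatters_def by blast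
    moreover have "i \<notin> c"
      using c(1) by (auto simp: code_del_def)
    ultimately show ?thesis
      using C by blast
  next
    case True
    let ?c = "insert i (s \<union> (S - {i}))"
    have "?c \<in> bool_interval (insert i s) (insert i t)"
      using S assms(2,4) by (auto simp: bool_interval_def)
    moreover have "?c \<inter> K = S"
      using S True assms(2-4) by auto
    ultimately show ?thesis
      using C by blast
  qed
qed

lemma shatters_pierced:
  assumes "is_piercing C i k" "pairwise_overlapping C K" "shatters (code_del C i) (K - {i})"
  shows "shatters C K"
proof -
  obtain s t where st: "s \<subseteq> t" "i \<notin> t"
    and C: "C = code_del C i \<union> bool_interval (insert i s) (insert i t)"
    using assms(1) unfolding is_piercing_def by blast
  show ?thesis
  proof (cases "i \<in> K")
    case False
    moreover have "code_del C i \<subseteq> C"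
      using C by blast
    ultimately show ?thesis
      using assms(3) shatters_mono by fastforce
  next
    case True
    then have "K - {i} \<subseteq> t - s"
      by (rule pairwise_overlapping_piercing_free[OF C assms(2)])
    then show ?thesis
      by (rule shatters_interval_extension[OF C st _ assms(3)])
  qed
qed

lemma k_ind_pierced_shatters:
  assumes "k_ind_pierced k C" "pairwise_overlapping C K"
  shows "shatters C K"
  using assms
proof (induction arbitrary: K rule: k_ind_pierced.induct)
  case base
  then have "K = {}"
    by (auto simp: pairwise_overlapping_def)
  then show ?case
    by (simp add: shatters_def)
next
  case (step C i k')
  then show ?case
    using shatters_pierced pairwise_overlapping_code_del by blast
qed

section \<open>Venn diagrams of balls\<close>

definition venn_diagram :: "'i set \<Rightarrow> ('i \<Rightarrow> 'a set) \<Rightarrow> bool" where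
  "venn_diagram K U \<longleftrightarrow> (\<forall>S\<subseteq>K. \<exists>x. \<forall>i\<in>K. x \<in> U i \<longleftrightarrow> i \<in> S)"

lemma venn_diagramD:
  "venn_diagram K U \<Longrightarrow> S \<subseteq> K \<Longrightarrow> \<exists>x. \<forall>i\<in>K. x \<in> U i \<longleftrightarrow> i \<in> S"
  unfolding venn_diagram_def by blast

lemma nontrivial_linear_relation:
  fixes w :: "'i \<Rightarrow> 'a::euclidean_space"
  assumes "finite K" "card K > DIM('a)"
  obtains l where "\<exists>i\<in>K. l i \<noteq> 0" "(\<Sum>i\<in>K. l i *\<^sub>R w i) = 0"
proof (cases "inj_on w K")
  case True
  then have "dependent (w ` K)"
    using assms dependent_biggerset[of "w ` K"] by (simp add: card_image)
  then obtain u where u: "\<exists>v\<in>w ` K. u v \<noteq> 0" "(\<Sum>v\<in>w ` K. u v *\<^sub>R v) = 0"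
    using dependent_finite[of "w ` K"] assms(1) by auto
  show thesis
  proof (rule that)
    show "\<exists>i\<in>K. (u \<circ> w) i \<noteq> 0"
      using u(1) by auto
    show "(\<Sum>i\<in>K. (u \<circ> w) i *\<^sub>R w i) = 0"
      using u(2) sum.reindex[OF True, of "\<lambda>v. u v *\<^sub>R v"] by simp
  qed
next
  case False
  then obtain i j where ij: "i \<in> K" "j \<in> K" "i \<noteq> j" "w i = w j"
    unfolding inj_on_def by blast
  let ?l = "\<lambda>m. if m = i then 1 else if m = j then - 1 else 0 :: real"
  show thesis
  proof (rule that)
    show "\<exists>m\<in>K. ?l m \<noteq> 0"
      using ij(1) by auto
    have "(\<Sum>m\<in>K. ?l m *\<^sub>R w m) = (\<Sum>m\<in>{i, j}. ?l m *\<^sub>R w m)"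
      by (rule sum.mono_neutral_right) (use assms ij in auto)
    also have "\<dots> = 0"
      using ij by simp
    finally show "(\<Sum>m\<in>K. ?l m *\<^sub>R w m) = 0" .
  qed
qed

lemma affine_relation:
  fixes p :: "'i \<Rightarrow> 'a::euclidean_space"
  assumes "finite K" "card K \<ge> DIM('a) + 2"
  obtains l where "\<exists>i\<in>K. l i \<noteq> 0" "sum l K = 0" "(\<Sum>i\<in>K. l i *\<^sub>R p i) = 0"
proof -
  have "card K > DIM(real \<times> 'a)"
    using assms(2) by simp
  then obtain l where l: "\<exists>i\<in>K. l i \<noteq> 0" "(\<Sum>i\<in>K. l i *\<^sub>R (1 :: real, p i)) = 0"
    using nontrivial_linear_relation[OF assms(1), of "\<lambda>i. (1 :: real, p i)"] by blast
  moreover have "sum l K = 0"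
    using arg_cong[OF l(2), of fst] by (simp add: fst_sum)
  moreover have "(\<Sum>i\<in>K. l i *\<^sub>R p i) = 0"
    using arg_cong[OF l(2), of snd] by (simp add: snd_sum)
  ultimately show thesis
    using that by blast
qed

text \<open>The power of a point x with respect to the sphere with centre c and radius r is
  (norm (x - c))^2 - r^2.\<close>

lemma power_combination_constant:
  fixes c :: "'i \<Rightarrow> 'a::real_inner"
  assumes "sum l K = 0" "(\<Sum>i\<in>K. l i *\<^sub>R c i) = 0"
  shows "(\<Sum>i\<in>K. l i * ((norm (x - c i))\<^sup>2 - (r i)\<^sup>2))
       = (\<Sum>i\<in>K. l i * ((norm (c i))\<^sup>2 - (r i)\<^sup>2))"
proof -
  have "l i * ((norm (x - c i))\<^sup>2 - (r i)\<^sup>2)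
      = l i * (x \<bullet> x) - 2 * (x \<bullet> (l i *\<^sub>R c i)) + l i * ((norm (c i))\<^sup>2 - (r i)\<^sup>2)" for i
    by (simp add: power2_norm_eq_inner inner_diff_left inner_diff_right inner_commute algebra_simps)
  then have "(\<Sum>i\<in>K. l i * ((norm (x - c i))\<^sup>2 - (r i)\<^sup>2))
      = sum l K * (x \<bullet> x) - 2 * (x \<bullet> (\<Sum>i\<in>K. l i *\<^sub>R c i))
        + (\<Sum>i\<in>K. l i * ((norm (c i))\<^sup>2 - (r i)\<^sup>2))"
    by (simp add: sum.distrib sum_subtractf sum_distrib_left sum_distrib_right inner_sum_right)
  then show ?thesis
    using assms by simp
qed

lemma mem_ball_iff_power_neg:
  fixes x c :: "'a::real_normed_vector"
  assumes "r > 0"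
  shows "x \<in> ball c r \<longleftrightarrow> (norm (x - c))\<^sup>2 - r\<^sup>2 < 0"
proof -
  have "x \<in> ball c r \<longleftrightarrow> norm (x - c) < r"
    by (simp add: dist_norm norm_minus_commute)
  also have "\<dots> \<longleftrightarrow> (norm (x - c))\<^sup>2 < r\<^sup>2"
    using assms by (meson less_imp_le norm_ge_zero power2_less_imp_less power_strict_mono pos2)
  finally show ?thesis
    by simp
qed

lemma power_combination_neg:
  fixes c :: "'i \<Rightarrow> 'a::real_normed_vector"
  assumes "finite K" "\<forall>i\<in>K. r i > 0" "\<exists>i\<in>K. l i > 0"
    and "\<forall>i\<in>K. x \<in> ball (c i) (r i) \<longleftrightarrow> l i > 0"
  shows "(\<Sum>i\<in>K. l i * ((norm (x - c i))\<^sup>2 - (r i)\<^sup>2)) < 0"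
proof -
  have sign: "l i > 0 \<longleftrightarrow> (norm (x - c i))\<^sup>2 - (r i)\<^sup>2 < 0" if "i \<in> K" for i
    using mem_ball_iff_power_neg[of "r i" x "c i"] assms(2,4) that by simp
  have "(\<Sum>i\<in>K. l i * ((norm (x - c i))\<^sup>2 - (r i)\<^sup>2)) < (\<Sum>i\<in>K. 0)"
  proof (rule sum_strict_mono_ex1[OF assms(1)])
    show "\<forall>i\<in>K. l i * ((norm (x - c i))\<^sup>2 - (r i)\<^sup>2) \<le> 0"
    proof
      fix i assume i: "i \<in> K"
      show "l i * ((norm (x - c i))\<^sup>2 - (r i)\<^sup>2) \<le> 0"
      proof (cases "l i > 0")
        case True
        then show ?thesis
          using sign[OF i] by (simp add: mult_pos_neg less_imp_le)
      next
        case False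
        then show ?thesis
          using sign[OF i] by (simp add: mult_nonpos_nonneg)
      qed
    qed
    obtain i where "i \<in> K" "l i > 0"
      using assms(3) by blast
    then show "\<exists>i\<in>K. l i * ((norm (x - c i))\<^sup>2 - (r i)\<^sup>2) < 0"
      using sign mult_pos_neg by blast
  qed
  then show ?thesis
    by simp
qed

lemma sum_eq_zero_exists_pos:
  fixes l :: "'i \<Rightarrow> 'a::linordered_ab_group_add"
  assumes "finite K" "sum l K = 0" "\<exists>i\<in>K. l i \<noteq> 0"
  shows "\<exists>i\<in>K. l i > 0"
proof (rule ccontr)
  assume "\<not> (\<exists>i\<in>K. l i > 0)"
  then have "\<forall>i\<in>K. 0 \<le> - l i"
    by (simp add: not_less)
  moreover have "(\<Sum>i\<in>K. - l i) = 0"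
    using assms(2) by (simp add: sum_negf)
  ultimately have "\<forall>i\<in>K. - l i = 0"
    using sum_nonneg_eq_0_iff[OF assms(1), of "\<lambda>i. - l i"] by simp
  then show False
    using assms(3) by simp
qed

theorem card_le_if_venn_diagram_balls:
  fixes c :: "'i \<Rightarrow> 'a::euclidean_space"
  assumes "finite K" "\<forall>i\<in>K. r i > 0" "venn_diagram K (\<lambda>i. ball (c i) (r i))"
  shows "card K \<le> DIM('a) + 1"
proof (rule ccontr)
  assume "\<not> card K \<le> DIM('a) + 1"
  then have "card K \<ge> DIM('a) + 2"
    by simp
  then obtain l where l: "\<exists>i\<in>K. l i \<noteq> 0" "sum l K = 0" "(\<Sum>i\<in>K. l i *\<^sub>R c i) = 0"
    using affine_relation[OF assms(1)] by blast
  let ?pow = "\<lambda>l x. \<Sum>i\<in>K. l i * ((norm (x - c i))\<^sup>2 - (r i)\<^sup>2)"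
  obtain x where "\<forall>i\<in>K. x \<in> ball (c i) (r i) \<longleftrightarrow> i \<in> {i\<in>K. l i > 0}"
    using venn_diagramD[OF assms(3), of "{i\<in>K. l i > 0}"] by auto
  then have neg: "?pow l x < 0"
    using power_combination_neg[OF assms(1,2) sum_eq_zero_exists_pos[OF assms(1) l(2,1)]] by simp
  obtain y where "\<forall>i\<in>K. y \<in> ball (c i) (r i) \<longleftrightarrow> i \<in> {i\<in>K. - l i > 0}"
    using venn_diagramD[OF assms(3), of "{i\<in>K. - l i > 0}"] by auto
  moreover have "\<exists>i\<in>K. - l i > 0"
    using sum_eq_zero_exists_pos[OF assms(1), of "\<lambda>i. - l i"] l(1,2) by (simp add: sum_negf)
  ultimately have "?pow (\<lambda>i. - l i) y < 0"
    using power_combination_neg[OF assms(1,2), of "\<lambda>i. - l i"] by simp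
  then have pos: "?pow l y > 0"
    by (simp add: sum_negf)
  show False
    using neg pos power_combination_constant[OF l(2,3), of x r] power_combination_constant[OF l(2,3), of y r]
    by simp
qed

lemma realizes_venn_diagram:
  assumes "realizes n C U" "K \<subseteq> {1..n}" "shatters C K"
  shows "venn_diagram K U"
  unfolding venn_diagram_def
proof (intro allI impI)
  fix S assume "S \<subseteq> K"
  then obtain c where c: "c \<in> C" "c \<inter> K = S"
    using assms(3) unfolding shatters_def by blast
  then have "(\<Inter>i\<in>c. U i) - (\<Union>j\<in>{1..n} - c. U j) \<noteq> {}"
    using assms(1) unfolding realizes_def by auto
  then obtain x where x: "\<forall>i\<in>c. x \<in> U i" "\<forall>j\<in>{1..n} - c. x \<notin> U j"
    by blast
  have "\<forall>i\<in>K. x \<in> U i \<longleftrightarrow> i \<in> S"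
    using x c(2) assms(2) by blast
  then show "\<exists>x. \<forall>i\<in>K. x \<in> U i \<longleftrightarrow> i \<in> S"
    by blast
qed

theorem lemma3p7:
  fixes n k :: nat and C :: "nat set set" and K :: "nat set"
  assumes "is_code n C"
    and "ind_pierced C"
    and "K \<subseteq> {1..n}" and "card K = k + 1"
    and "\<forall>a\<in>K. \<forall>b\<in>K. a \<noteq> b \<longrightarrow> code_graph_edge n C a b"
    and "DIM('a::euclidean_space) = k - 1"
  shows "\<not> (\<exists>(c :: nat \<Rightarrow> 'a) r. (\<forall>i\<in>{1..n}. r i > 0)
            \<and> well_formed_balls {1..n} c r
            \<and> realizes n C (\<lambda>i. ball (c i) (r i)))"
proof
  assume "\<exists>(c :: nat \<Rightarrow> 'a) r. (\<forall>i\<in>{1..n}. r i > 0)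
            \<and> well_formed_balls {1..n} c r
            \<and> realizes n C (\<lambda>i. ball (c i) (r i))"
  then obtain c :: "nat \<Rightarrow> 'a" and r where r: "\<forall>i\<in>{1..n}. r i > 0"
    and realization: "realizes n C (\<lambda>i. ball (c i) (r i))"
    by blast
  obtain k' where "k_ind_pierced k' C"
    using assms(2) unfolding ind_pierced_def by blast
  moreover have "pairwise_overlapping C K"
    by (rule code_graph_clique_pairwise_overlapping[OF assms(1,3,5)])
  ultimately have "shatters C K"
    by (rule k_ind_pierced_shatters)
  then have "venn_diagram K (\<lambda>i. ball (c i) (r i))"
    by (rule realizes_venn_diagram[OF realization assms(3)])
  moreover have "finite K"
    using assms(3) by (rule finite_subset) simp
  ultimately have "card K \<le> DIM('a) + 1"
    using card_le_if_venn_diagram_balls r assms(3) by blast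
  then show False
    using assms(4,6) DIM_positive[where 'a = 'a] by linarith
qed

end
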